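(* Let $n\in\mathbb{Z}$ and let $A$ be a $3\times 3$ matrix with integer entries. Then $A$ is a Cappell–Shaneson matrix with trace $n$ if and only if $f_n(A)=O$, where $f_n(x)=x^3-nx^2+(n-1)x-1$ and $O$ is the $3\times 3$ zero matrix.
   Context: A Cappell–Shaneson (CS) matrix is a matrix $A\in SL(3;\mathbb{Z})$ with $\det(A-I)=1$. The polynomial $f_n(x)=x^3-nx^2+(n-1)x-1$ is irreducible over $\mathbb{Q}$ for every integer $n$; this is a known fact that may be used. *)

theory Defs
  imports "HOL-Analysis.Analysis"
begin

definition CS_matrix :: "int^3^3 \<Rightarrow> bool" where
  "CS_matrix A \<longleftrightarrow> det A = 1 \<and> det (A - mat 1) = 1"

definition f_mat :: "int \<Rightarrow> int^3^3 \<Rightarrow> int^3^3" where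
  "f_mat n A = A ** A ** A - mat n ** (A ** A) + mat (n - 1) ** A - mat 1"

end

theory Submission
  imports Defs
begin

text \<open>By Cayley--Hamilton, \<open>f\<^sub>n(A) = (tr A - n) A\<^sup>2 + (n - 1 - c\<^sub>2) A + (det A - 1) I\<close>, where \<open>c\<^sub>2\<close>
  is the sum of the principal \<open>2 \<times> 2\<close> minors, and \<open>det (A - I) = det A - c\<^sub>2 + tr A - 1\<close>. So \<open>A\<close> is
  a CS matrix of trace \<open>n\<close> iff these three coefficients vanish, and it remains to see that
  \<open>f\<^sub>n(A) = 0\<close> rules out every nonzero relation \<open>a A\<^sup>2 + b A + e I = 0\<close>. Dividing \<open>a\<^sup>2 f\<^sub>n\<close> by
  \<open>a x\<^sup>2 + b x + e\<close> leaves a linear remainder that also annihilates \<open>A\<close>; a nonzero linear relation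
  makes \<open>A\<close> scalar, and a zero remainder makes \<open>(n a + b) / a\<close> a root of \<open>f\<^sub>n\<close>. Both contradict
  the fact that \<open>f\<^sub>n\<close> has no rational root, which holds because its homogenization takes odd
  values at coprime pairs.\<close>

lemma mat_matrix_mult_nth: "(mat k ** (A::'a::comm_semiring_1^'n^'m)) $ i $ j = k * A $ i $ j"
  by (simp add: matrix_matrix_mult_def mat_def if_distrib if_distribR cong: if_cong)

lemma matrix_mult_mat_commute: "(A::'a::comm_semiring_1^'n^'n) ** mat k = mat k ** A"
  by (simp add: vec_eq_iff mat_matrix_mult_nth)
     (simp add: matrix_matrix_mult_def mat_def if_distrib if_distribR mult.commute cong: if_cong)

lemma matrix_mult_mat_left_commute:
  "(A::'a::comm_semiring_1^'n^'n) ** (mat k ** B) = mat k ** (A ** B)"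
  by (metis matrix_mul_assoc matrix_mult_mat_commute)

lemma mat_matrix_mult_assoc: "(mat k ** (A::'a::comm_semiring_1^'n^'n)) ** B = mat k ** (A ** B)"
  by (simp add: matrix_mul_assoc)

lemma mat_mult_mat: "mat k ** (mat l :: 'a::comm_semiring_1^'n^'n) = mat (k * l)"
  by (simp add: vec_eq_iff mat_matrix_mult_nth) (simp add: mat_def)

lemma mat_mult_mat_mult: "mat k ** (mat l ** (A::'a::comm_semiring_1^'n^'n)) = mat (k * l) ** A"
  by (simp add: matrix_mul_assoc mat_mult_mat)

lemma matrix_add_rdistrib: "((A::'a::semiring_1^'n^'m) + B) ** C = A ** C + B ** C"
  by (vector matrix_matrix_mult_def sum.distrib[symmetric] distrib_right)

lemma matrix_diff_rdistrib: "((A::'a::ring_1^'n^'m) - B) ** C = A ** C - B ** C"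
  by (vector matrix_matrix_mult_def sum_subtractf[symmetric] left_diff_distrib)

lemma matrix_diff_ldistrib: "(A::'a::ring_1^'n^'m) ** (B - C) = A ** B - A ** C"
  by (vector matrix_matrix_mult_def sum_subtractf[symmetric] right_diff_distrib)

lemma mat_eq_0_iff: "(mat k :: 'a::zero^'n^'n) = 0 \<longleftrightarrow> k = 0"
proof
  assume "mat k = (0 :: 'a^'n^'n)"
  then have "mat k $ i $ i = (0 :: 'a^'n^'n) $ i $ i" for i
    by simp
  then show "k = 0"
    by (simp add: mat_def)
qed (simp add: vec_eq_iff mat_def)

lemma scalar_matrix_of_linear_relation:
  fixes X :: "'a::idom^'n^'n"
  assumes "u \<noteq> 0" and "mat u ** X + mat v = 0"
  shows "X = mat (X $ i $ i)"
proof -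
  have entry: "u * X $ j $ k + (if j = k then v else 0) = 0" for j k
    using arg_cong[OF assms(2), of "\<lambda>M. M $ j $ k"]
    by (simp only: vector_add_component mat_matrix_mult_nth zero_index) (simp add: mat_def)
  have "X $ j $ j = X $ i $ i" for j
    using entry[of j j] entry[of i i] assms(1) by (simp add: add_eq_0_iff)
  moreover have "X $ j $ k = 0" if "j \<noteq> k" for j k
    using entry[of j k] that assms(1) by simp
  ultimately show ?thesis
    by (auto simp: vec_eq_iff mat_def)
qed

definition principal_minors_sum :: "int^3^3 \<Rightarrow> int" where
  "principal_minors_sum A = A$1$1 * A$2$2 - A$1$2 * A$2$1 + A$1$1 * A$3$3 - A$1$3 * A$3$1
     + A$2$2 * A$3$3 - A$2$3 * A$3$2"

lemma cayley_hamilton_3: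
  "A ** A ** A = mat (trace A) ** (A ** A) - mat (principal_minors_sum A) ** A + mat (det A)"
  unfolding vec_eq_iff forall_3 vector_add_component vector_minus_component mat_matrix_mult_nth
  by (simp add: matrix_matrix_mult_def sum_3 trace_def principal_minors_sum_def det_3 mat_def
      algebra_simps)

lemma det_minus_mat1_3: "det (A - mat 1) = det A - principal_minors_sum A + trace A - 1"
  by (simp add: det_3 principal_minors_sum_def trace_def sum_3 mat_def algebra_simps)

lemma f_mat_eq_quadratic:
  "f_mat n A = mat (trace A - n) ** (A ** A) + mat (n - 1 - principal_minors_sum A) ** A
     + mat (det A - 1)"
  unfolding f_mat_def cayley_hamilton_3 vec_eq_iff vector_add_component vector_minus_component
    mat_matrix_mult_nth
  by (simp add: mat_def algebra_simps)

lemma f_mat_mat: "f_mat n (mat l) = mat (l^3 - n * l^2 + (n - 1) * l - 1)"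
  by (simp add: f_mat_def mat_mult_mat vec_eq_iff)
     (simp add: mat_def power2_eq_square power3_eq_cube algebra_simps)

lemma f_mat_division_identity:
  fixes X :: "'a::comm_ring_1^'n^'n"
  shows "mat (a^2) ** (X ** X ** X - mat n ** (X ** X) + mat (n - 1) ** X - mat 1)
     = (mat a ** X - mat (n * a + b)) ** (mat a ** (X ** X) + mat b ** X + mat e)
       + mat (b^2 - a * e + n * a * b + a^2 * (n - 1)) ** X + mat (b * e + n * a * e - a^2)"
  unfolding matrix_mult_mat_left_commute[of X] matrix_mult_mat_commute[of X] mat_matrix_mult_assoc
    mat_mult_mat_mult mat_mult_mat matrix_add_ldistrib matrix_add_rdistrib matrix_diff_rdistrib
    matrix_diff_ldistrib matrix_mul_assoc[of X X X] matrix_mul_rid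
  unfolding vec_eq_iff mat_matrix_mult_nth vector_add_component vector_minus_component
  by (simp add: mat_def algebra_simps power2_eq_square)

lemma odd_f_homogenized:
  fixes s a n :: int
  assumes "odd s \<or> odd a"
  shows "odd (s^3 - n * s^2 * a + (n - 1) * s * a^2 - a^3)"
  using assms by auto

lemma f_homogenized_root_imp_zero:
  fixes s a n :: int
  assumes "s^3 - n * s^2 * a + (n - 1) * s * a^2 - a^3 = 0"
  shows "a = 0"
proof (rule ccontr)
  assume "a \<noteq> 0"
  then obtain s' a' g where s: "s = s' * g" and a: "a = a' * g" and "coprime s' a'"
    using gcd_coprime_exists[of s a] by auto
  then have "odd s' \<or> odd a'"
    using coprime_common_divisor[of s' a' 2] by auto
  then have odd: "odd (s'^3 - n * s'^2 * a' + (n - 1) * s' * a'^2 - a'^3)"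
    by (rule odd_f_homogenized)
  have "s^3 - n * s^2 * a + (n - 1) * s * a^2 - a^3
      = g^3 * (s'^3 - n * s'^2 * a' + (n - 1) * s' * a'^2 - a'^3)"
    unfolding s a by (simp add: algebra_simps power2_eq_square power3_eq_cube)
  moreover have "g \<noteq> 0"
    using \<open>a \<noteq> 0\<close> a by simp
  ultimately have "s'^3 - n * s'^2 * a' + (n - 1) * s' * a'^2 - a'^3 = 0"
    using assms by simp
  with odd show False
    by simp
qed

lemma f_mat_not_scalar:
  assumes "f_mat n X = 0"
  shows "X \<noteq> mat l"
proof
  assume "X = mat l"
  with assms have "l^3 - n * l^2 * 1 + (n - 1) * l * 1^2 - 1^3 = 0"
    by (simp add: f_mat_mat mat_eq_0_iff)
  then show False
    using f_homogenized_root_imp_zero by fastforce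
qed

lemma f_mat_linear_relation_trivial:
  assumes "f_mat n X = 0" and "mat u ** X + mat v = 0"
  shows "u = 0 \<and> v = 0"
proof (cases "u = 0")
  case True
  with assms(2) show ?thesis
    by (simp add: mat_eq_0_iff)
next
  case False
  then have "X = mat (X $ 1 $ 1)"
    using assms(2) by (rule scalar_matrix_of_linear_relation)
  with f_mat_not_scalar[OF assms(1)] show ?thesis
    by blast
qed

lemma f_mat_quadratic_relation_trivial:
  assumes f: "f_mat n X = 0" and q: "mat a ** (X ** X) + mat b ** X + mat e = 0"
  shows "a = 0 \<and> b = 0 \<and> e = 0"
proof -
  define U where "U = b^2 - a * e + n * a * b + a^2 * (n - 1)"
  define V where "V = b * e + n * a * e - a^2"
  have "mat U ** X + mat V = 0"
    using f_mat_division_identity[of a X n b e] f q unfolding f_mat_def U_def V_def by simp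
  then have UV: "U = 0 \<and> V = 0"
    by (rule f_mat_linear_relation_trivial[OF f])
  \<comment> \<open>evaluating the division identity at the root \<open>(n a + b) / a\<close> of the linear quotient\<close>
  have "(n * a + b)^3 - n * (n * a + b)^2 * a + (n - 1) * (n * a + b) * a^2 - a^3
      = U * (n * a + b) + V * a"
    unfolding U_def V_def by (simp add: algebra_simps power2_eq_square power3_eq_cube)
  with UV have a: "a = 0"
    by (simp add: f_homogenized_root_imp_zero)
  with q have "mat b ** X + mat e = 0"
    by simp
  then have "b = 0 \<and> e = 0"
    by (rule f_mat_linear_relation_trivial[OF f])
  with a show ?thesis
    by simp
qed

theorem mainTheorem1:
  fixes n :: int and A :: "int^3^3"
  shows "(CS_matrix A \<and> trace A = n) \<longleftrightarrow> f_mat n A = 0"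
proof -
  have "f_mat n A = 0 \<longleftrightarrow>
      trace A - n = 0 \<and> n - 1 - principal_minors_sum A = 0 \<and> det A - 1 = 0"
    using f_mat_quadratic_relation_trivial[of n A "trace A - n" "n - 1 - principal_minors_sum A"
        "det A - 1"]
    unfolding f_mat_eq_quadratic by auto
  then show ?thesis
    unfolding CS_matrix_def det_minus_mat1_3 by auto
qed

end
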